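(* Let $T$ be a line trigraph that contains no odd prism, and let $H$ be a bipartite graph such that $L(H)$ is the full realization of $T$. Then $H$ has no (not necessarily induced) subgraph isomorphic to an even theta, and $H$ is series-parallel, i.e. $H$ has no $K_4$-minor.
   Context: A trigraph $T$ consists of a finite set $V(T)$ and a map $\theta:\binom{V(T)}{2}\to\{-1,0,1\}$; distinct $u,v$ are strongly adjacent if $\theta(uv)=1$, strongly antiadjacent if $\theta(uv)=-1$, semiadjacent if $\theta(uv)=0$, adjacent if $\theta(uv)\in\{0,1\}$, antiadjacent if $\theta(uv)\in\{0,-1\}$. The full realization of $T$ is the graph on $V(T)$ whose edges are the adjacent pairs. A clique (strong clique) is a set of pairwise adjacent (strongly adjacent) vertices. $T$ is a line trigraph if its full realization is the line graph of a bipartite graph and every clique of size at least $3$ in $T$ is a strong clique. A prism in $T$ is an induced subtrigraph whose full realization consists of two vertex-disjoint triangles $\{a_1,a_2,a_3\}$, $\{b_1,b_2,b_3\}$ and three vertex-disjoint induced paths $P_i$ from $a_i$ to $b_i$ ($i=1,2,3$) with no other edges; it is odd if all three $P_i$ have an odd number of edges. An even theta is a graph consisting of three internally vertex-disjoint paths with the same two endpoints, each having an even number of edges. *)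

theory Defs
  imports Main
begin

definition trigraph :: "'a set \<Rightarrow> ('a \<Rightarrow> 'a \<Rightarrow> int) \<Rightarrow> bool" where
  "trigraph V \<theta> \<longleftrightarrow> finite V \<and>
     (\<forall>u\<in>V. \<forall>v\<in>V. u \<noteq> v \<longrightarrow> \<theta> u v = \<theta> v u \<and> \<theta> u v \<in> {-1, 0, 1})"

definition tadj :: "('a \<Rightarrow> 'a \<Rightarrow> int) \<Rightarrow> 'a \<Rightarrow> 'a \<Rightarrow> bool" where
  "tadj \<theta> u v \<longleftrightarrow> u \<noteq> v \<and> \<theta> u v \<in> {0, 1}"

definition tstrong :: "('a \<Rightarrow> 'a \<Rightarrow> int) \<Rightarrow> 'a \<Rightarrow> 'a \<Rightarrow> bool" where
  "tstrong \<theta> u v \<longleftrightarrow> u \<noteq> v \<and> \<theta> u v = 1"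

definition tclique :: "'a set \<Rightarrow> ('a \<Rightarrow> 'a \<Rightarrow> int) \<Rightarrow> 'a set \<Rightarrow> bool" where
  "tclique V \<theta> K \<longleftrightarrow> K \<subseteq> V \<and> (\<forall>u\<in>K. \<forall>v\<in>K. u \<noteq> v \<longrightarrow> tadj \<theta> u v)"

definition tstrong_clique :: "'a set \<Rightarrow> ('a \<Rightarrow> 'a \<Rightarrow> int) \<Rightarrow> 'a set \<Rightarrow> bool" where
  "tstrong_clique V \<theta> K \<longleftrightarrow> K \<subseteq> V \<and> (\<forall>u\<in>K. \<forall>v\<in>K. u \<noteq> v \<longrightarrow> tstrong \<theta> u v)"

definition graph :: "'b set \<Rightarrow> ('b \<Rightarrow> 'b \<Rightarrow> bool) \<Rightarrow> bool" where
  "graph W E \<longleftrightarrow> finite W \<and> (\<forall>u v. E u v \<longrightarrow> u \<in> W \<and> v \<in> W \<and> u \<noteq> v \<and> E v u)"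

definition bipartite :: "'b set \<Rightarrow> ('b \<Rightarrow> 'b \<Rightarrow> bool) \<Rightarrow> bool" where
  "bipartite W E \<longleftrightarrow> (\<exists>A B. A \<union> B = W \<and> A \<inter> B = {} \<and>
     (\<forall>u v. E u v \<longrightarrow> (u \<in> A \<and> v \<in> B) \<or> (u \<in> B \<and> v \<in> A)))"

definition edges :: "('b \<Rightarrow> 'b \<Rightarrow> bool) \<Rightarrow> 'b set set" where
  "edges E = {{u, v} | u v. E u v}"

definition is_line_graph_of ::
  "'a set \<Rightarrow> ('a \<Rightarrow> 'a \<Rightarrow> bool) \<Rightarrow> 'b set \<Rightarrow> ('b \<Rightarrow> 'b \<Rightarrow> bool) \<Rightarrow> bool" where
  "is_line_graph_of V adj W E \<longleftrightarrow> (\<exists>f. bij_betw f V (edges E) \<and>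
     (\<forall>x\<in>V. \<forall>y\<in>V. adj x y \<longleftrightarrow> x \<noteq> y \<and> f x \<inter> f y \<noteq> {}))"

text \<open>Line trigraph. The bipartite graph in the definition is taken on vertex type nat;
  since all graphs here are finite, this is no restriction (up to isomorphism).\<close>

definition line_trigraph :: "'a set \<Rightarrow> ('a \<Rightarrow> 'a \<Rightarrow> int) \<Rightarrow> bool" where
  "line_trigraph V \<theta> \<longleftrightarrow> trigraph V \<theta> \<and>
     (\<exists>(W :: nat set) E. graph W E \<and> bipartite W E \<and> is_line_graph_of V (tadj \<theta>) W E) \<and>
     (\<forall>K. tclique V \<theta> K \<and> card K \<ge> 3 \<longrightarrow> tstrong_clique V \<theta> K)"

text \<open>A path (as a vertex list) in a graph with adjacency E; its number of edges is length - 1.\<close>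

definition gpath :: "('b \<Rightarrow> 'b \<Rightarrow> bool) \<Rightarrow> 'b list \<Rightarrow> bool" where
  "gpath E ps \<longleftrightarrow> ps \<noteq> [] \<and> distinct ps \<and>
     (\<forall>i. Suc i < length ps \<longrightarrow> E (ps ! i) (ps ! Suc i))"

definition induced_path :: "('b \<Rightarrow> 'b \<Rightarrow> bool) \<Rightarrow> 'b list \<Rightarrow> bool" where
  "induced_path E ps \<longleftrightarrow> gpath E ps \<and>
     (\<forall>i j. j < length ps \<longrightarrow> Suc i < j \<longrightarrow> \<not> E (ps ! i) (ps ! j) \<and> \<not> E (ps ! j) (ps ! i))"

definition consec :: "'b list \<Rightarrow> 'b \<Rightarrow> 'b \<Rightarrow> bool" where
  "consec ps u v \<longleftrightarrow> (\<exists>k. Suc k < length ps \<and> {u, v} = {ps ! k, ps ! Suc k})"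

text \<open>X induces an odd prism in the graph (V, adj): triangles {a1,a2,a3}, {b1,b2,b3}
  (a_i = first, b_i = last vertex of P_i), vertex-disjoint induced paths P_i, no other edges,
  and every P_i has an odd number of edges.\<close>

definition odd_prism_in :: "'a set \<Rightarrow> ('a \<Rightarrow> 'a \<Rightarrow> bool) \<Rightarrow> 'a set \<Rightarrow> bool" where
  "odd_prism_in V adj X \<longleftrightarrow> X \<subseteq> V \<and> (\<exists>P1 P2 P3.
     X = set P1 \<union> set P2 \<union> set P3 \<and>
     induced_path adj P1 \<and> induced_path adj P2 \<and> induced_path adj P3 \<and>
     set P1 \<inter> set P2 = {} \<and> set P1 \<inter> set P3 = {} \<and> set P2 \<inter> set P3 = {} \<and>
     hd P1 \<noteq> last P1 \<and> hd P2 \<noteq> last P2 \<and> hd P3 \<noteq> last P3 \<and>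
     odd (length P1 - 1) \<and> odd (length P2 - 1) \<and> odd (length P3 - 1) \<and>
     (\<forall>u\<in>X. \<forall>v\<in>X. adj u v \<longleftrightarrow>
        consec P1 u v \<or> consec P2 u v \<or> consec P3 u v \<or>
        (u \<noteq> v \<and> u \<in> {hd P1, hd P2, hd P3} \<and> v \<in> {hd P1, hd P2, hd P3}) \<or>
        (u \<noteq> v \<and> u \<in> {last P1, last P2, last P3} \<and> v \<in> {last P1, last P2, last P3})))"

definition has_even_theta :: "'b set \<Rightarrow> ('b \<Rightarrow> 'b \<Rightarrow> bool) \<Rightarrow> bool" where
  "has_even_theta W E \<longleftrightarrow> (\<exists>x y P1 P2 P3. x \<noteq> y \<and>
     gpath E P1 \<and> gpath E P2 \<and> gpath E P3 \<and>
     set P1 \<subseteq> W \<and> set P2 \<subseteq> W \<and> set P3 \<subseteq> W \<and>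
     hd P1 = x \<and> last P1 = y \<and> hd P2 = x \<and> last P2 = y \<and> hd P3 = x \<and> last P3 = y \<and>
     set P1 \<inter> set P2 = {x, y} \<and> set P1 \<inter> set P3 = {x, y} \<and> set P2 \<inter> set P3 = {x, y} \<and>
     even (length P1 - 1) \<and> even (length P2 - 1) \<and> even (length P3 - 1))"

definition connected_on :: "('b \<Rightarrow> 'b \<Rightarrow> bool) \<Rightarrow> 'b set \<Rightarrow> bool" where
  "connected_on E S \<longleftrightarrow>
     (\<forall>u\<in>S. \<forall>v\<in>S. (\<lambda>x y. x \<in> S \<and> y \<in> S \<and> E x y)\<^sup>*\<^sup>* u v)"

definition has_K4_minor :: "'b set \<Rightarrow> ('b \<Rightarrow> 'b \<Rightarrow> bool) \<Rightarrow> bool" where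
  "has_K4_minor W E \<longleftrightarrow> (\<exists>B :: nat \<Rightarrow> 'b set.
     (\<forall>i<4. B i \<noteq> {} \<and> B i \<subseteq> W \<and> connected_on E (B i)) \<and>
     (\<forall>i<4. \<forall>j<4. i \<noteq> j \<longrightarrow> B i \<inter> B j = {} \<and> (\<exists>u\<in>B i. \<exists>v\<in>B j. E u v)))"

definition series_parallel :: "'b set \<Rightarrow> ('b \<Rightarrow> 'b \<Rightarrow> bool) \<Rightarrow> bool" where
  "series_parallel W E \<longleftrightarrow> \<not> has_K4_minor W E"

end

theory Submission
  imports Defs
begin

(* The line graph of an even theta is an odd prism: the edges at the two ends of the theta form
   the two triangles, and each path with 2m edges turns into an induced path with 2m - 1 edges.  A K4-minor of H yields a subdivision of K4 (join a centre of every
   branch set to its three attachments by a tripod); two of its branch vertices lie on the same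
   side of the bipartition, and the path between them together with the two routes through the
   other branch vertices is then an even theta. *)

section \<open>Paths\<close>

lemma gpath_iff_successively:
  "gpath E ps \<longleftrightarrow> ps \<noteq> [] \<and> distinct ps \<and> successively E ps"
  unfolding gpath_def successively_conv_nth by auto

lemma gpath_rev: "symp E \<Longrightarrow> gpath E ps \<Longrightarrow> gpath E (rev ps)"
  by (auto simp: gpath_iff_successively elim!: successively_mono dest: sympD)

lemma gpath_take: "gpath E ps \<Longrightarrow> 0 < n \<Longrightarrow> gpath E (take n ps)"
  using successively_append_iff[of E "take n ps" "drop n ps"]
  by (auto simp: gpath_iff_successively)

lemma gpath_drop: "gpath E ps \<Longrightarrow> n < length ps \<Longrightarrow> gpath E (drop n ps)"
  using successively_append_iff[of E "take n ps" "drop n ps"]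
  by (auto simp: gpath_iff_successively)

lemma gpath_append:
  "gpath E xs \<Longrightarrow> gpath E ys \<Longrightarrow> E (last xs) (hd ys) \<Longrightarrow> set xs \<inter> set ys = {}
   \<Longrightarrow> gpath E (xs @ ys)"
  by (auto simp: gpath_iff_successively successively_append_iff)

lemma gpath_append_tl:
  assumes "gpath E xs" "gpath E ys" "last xs = hd ys" "set xs \<inter> set ys \<subseteq> {hd ys}"
  shows "gpath E (xs @ tl ys)"
proof (cases ys)
  case (Cons z zs)
  then show ?thesis using assms
    by (auto simp: gpath_iff_successively successively_append_iff successively_Cons)
qed (use assms in \<open>simp add: gpath_iff_successively\<close>)

lemma set_append_tl:
  "xs \<noteq> [] \<Longrightarrow> ys \<noteq> [] \<Longrightarrow> last xs = hd ys \<Longrightarrow> set (xs @ tl ys) = set xs \<union> set ys"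
  by (cases ys) auto

lemma last_append_tl:
  "xs \<noteq> [] \<Longrightarrow> ys \<noteq> [] \<Longrightarrow> last xs = hd ys \<Longrightarrow> last (xs @ tl ys) = last ys"
  by (cases ys) auto

lemma gpath_even_length_ge_3:
  assumes "gpath E ps" "hd ps \<noteq> last ps" "even (length ps - 1)"
  shows "3 \<le> length ps"
proof -
  have "length ps \<noteq> 1" using assms(2) by (auto simp: length_Suc_conv)
  moreover have "0 < length ps" using assms(1) by (simp add: gpath_def)
  ultimately show ?thesis using assms(3) by presburger
qed

lemma consec_in_set: "consec ps u v \<Longrightarrow> u \<in> set ps \<and> v \<in> set ps"
  unfolding consec_def by (auto simp: doubleton_eq_iff)

lemma connected_on_gpath:
  assumes "connected_on E S" "u \<in> S" "v \<in> S"
  obtains ps where "gpath E ps" "hd ps = u" "last ps = v" "set ps \<subseteq> S"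
proof -
  have "(\<lambda>x y. x \<in> S \<and> y \<in> S \<and> E x y)\<^sup>*\<^sup>* u v"
    using assms unfolding connected_on_def by blast
  then have "\<exists>ps. gpath E ps \<and> hd ps = u \<and> last ps = v \<and> set ps \<subseteq> S"
  proof (induction rule: rtranclp_induct)
    case base
    show ?case using assms(2) by (intro exI[of _ "[u]"]) (simp add: gpath_def)
  next
    case (step w v)
    then obtain ps where ps: "gpath E ps" "hd ps = u" "last ps = w" "set ps \<subseteq> S" by blast
    show ?case
    proof (cases "v \<in> set ps")
      case True
      then obtain i where i: "i < length ps" "ps ! i = v" by (auto simp: in_set_conv_nth)
      moreover have "last (take (Suc i) ps) = ps ! i"
        using i by (simp add: take_Suc_conv_app_nth)
      ultimately show ?thesis using ps gpath_take[OF ps(1), of "Suc i"]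
        by (intro exI[of _ "take (Suc i) ps"]) (auto simp: hd_take dest: in_set_takeD)
    next
      case False
      then have "gpath E (ps @ [v])"
        using ps step.hyps(2) by (intro gpath_append) (auto simp: gpath_def)
      then show ?thesis using ps step.hyps(2) by (intro exI[of _ "ps @ [v]"]) (auto simp: gpath_def)
    qed
  qed
  then show thesis using that by blast
qed

lemma gpath_first_hit:
  assumes "gpath E ps" "set ps \<inter> T \<noteq> {}"
  obtains qs where "gpath E qs" "hd qs = hd ps" "set qs \<subseteq> set ps" "set qs \<inter> T = {last qs}"
proof -
  have "\<exists>qs. gpath E qs \<and> hd qs = hd ps \<and> set qs \<subseteq> set ps \<and> set qs \<inter> T = {last qs}"
    using assms
  proof (induction ps)
    case (Cons a ps)
    show ?case
    proof (cases "a \<in> T")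
      case True
      then show ?thesis by (intro exI[of _ "[a]"]) (auto simp: gpath_def)
    next
      case False
      then have "gpath E ps" "set ps \<inter> T \<noteq> {}" "E a (hd ps)" "a \<notin> set ps"
        using Cons.prems by (auto simp: gpath_iff_successively successively_Cons)
      then obtain qs where qs: "gpath E qs" "hd qs = hd ps" "set qs \<subseteq> set ps"
        "set qs \<inter> T = {last qs}" using Cons.IH by blast
      have "gpath E ([a] @ qs)"
        using qs \<open>E a (hd ps)\<close> \<open>a \<notin> set ps\<close> by (intro gpath_append) (auto simp: gpath_def)
      then show ?thesis using qs False
        by (intro exI[of _ "a # qs"]) (auto simp: gpath_def)
    qed
  qed simp
  then show thesis using that by blast
qed

lemma distinct_take_Suc_drop_inter:
  assumes "distinct ps" "i < length ps"
  shows "set (take (Suc i) ps) \<inter> set (drop i ps) = {ps ! i}"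
proof -
  have "take (Suc i) ps = take i ps @ [ps ! i]" "drop i ps = ps ! i # drop (Suc i) ps"
    using assms(2) by (simp_all add: take_Suc_conv_app_nth Cons_nth_drop_Suc)
  moreover have "distinct (take i ps @ ps ! i # drop (Suc i) ps)"
    using assms by (simp add: id_take_nth_drop[symmetric])
  ultimately show ?thesis by auto
qed

text \<open>The centre is where a path from \<open>r\<close> first meets a path from \<open>p\<close> to \<open>q\<close>.\<close>

lemma connected_on_tripod:
  assumes "symp E" "connected_on E S" "p \<in> S" "q \<in> S" "r \<in> S"
  obtains c A B C where "c \<in> S"
    "gpath E A" "gpath E B" "gpath E C" "hd A = c" "hd B = c" "hd C = c"
    "last A = p" "last B = q" "last C = r" "set A \<subseteq> S" "set B \<subseteq> S" "set C \<subseteq> S"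
    "set A \<inter> set B = {c}" "set A \<inter> set C = {c}" "set B \<inter> set C = {c}"
proof -
  obtain P where P: "gpath E P" "hd P = p" "last P = q" "set P \<subseteq> S"
    using connected_on_gpath assms(2-4) by metis
  obtain R0 where R0: "gpath E R0" "hd R0 = r" "last R0 = p" "set R0 \<subseteq> S"
    using connected_on_gpath assms(2,3,5) by metis
  have "p \<in> set R0 \<inter> set P" using R0 P by (metis IntI gpath_def hd_in_set last_in_set)
  then obtain R where R: "gpath E R" "hd R = r" "set R \<subseteq> set R0" "set R \<inter> set P = {last R}"
    using gpath_first_hit[OF R0(1), of "set P"] R0 by blast
  define c where "c = last R"
  have "c \<in> set P" using R(4) unfolding c_def by blast
  then obtain i where i: "i < length P" "P ! i = c" by (metis in_set_conv_nth)
  define A where "A = rev (take (Suc i) P)"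
  define B where "B = drop i P"
  define C where "C = rev R"
  have "distinct P" "R \<noteq> []" using P R by (auto simp: gpath_def)
  then have AB: "set A \<inter> set B = {c}"
    using distinct_take_Suc_drop_inter[OF _ i(1)] i(2) unfolding A_def B_def by simp
  have "set A \<union> set B \<subseteq> set P" unfolding A_def B_def by (auto dest: in_set_takeD in_set_dropD)
  moreover have Cc: "c \<in> set C" "set C \<inter> set P = {c}"
    using R \<open>R \<noteq> []\<close> unfolding C_def c_def by auto
  ultimately have AC: "set A \<inter> set C = {c}" and BC: "set B \<inter> set C = {c}" using AB by blast+
  have paths: "gpath E A" "gpath E B" "gpath E C" unfolding A_def B_def C_def
    using gpath_rev[OF assms(1)] gpath_take gpath_drop P(1) R(1) i(1) by blast+
  have ends: "hd A = c" "hd B = c" "hd C = c" "last A = p" "last B = q" "last C = r"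
    using i P R \<open>R \<noteq> []\<close> unfolding A_def B_def C_def c_def
    by (auto simp: hd_rev last_rev take_Suc_conv_app_nth hd_drop_conv_nth hd_conv_nth)
  have sets: "set A \<subseteq> S" "set B \<subseteq> S" "set C \<subseteq> S"
    using P R R0 unfolding A_def B_def C_def by (auto dest: in_set_takeD in_set_dropD)
  have "c \<in> S" using Cc sets by blast
  from that[OF this paths ends sets AB AC BC] show thesis .
qed

lemma connected_on_tripod_indexed:
  assumes "symp E" "connected_on E S" "card J = 3" "p ` J \<subseteq> S"
  obtains c L where "c \<in> S"
    "\<And>j. j \<in> J \<Longrightarrow> gpath E (L j) \<and> hd (L j) = c \<and> last (L j) = p j \<and> set (L j) \<subseteq> S"
    "\<And>j j'. j \<in> J \<Longrightarrow> j' \<in> J \<Longrightarrow> j \<noteq> j' \<Longrightarrow> set (L j) \<inter> set (L j') = {c}"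
proof -
  obtain j1 j2 j3 where J: "J = {j1, j2, j3}" "j1 \<noteq> j2" "j2 \<noteq> j3" "j1 \<noteq> j3"
    using assms(3) by (auto simp: card_3_iff)
  have pJ: "p j1 \<in> S" "p j2 \<in> S" "p j3 \<in> S" using assms(4) J(1) by auto
  obtain c A B C where "c \<in> S"
    and paths: "gpath E A" "gpath E B" "gpath E C"
    and ends: "hd A = c" "hd B = c" "hd C = c" "last A = p j1" "last B = p j2" "last C = p j3"
    and sets: "set A \<subseteq> S" "set B \<subseteq> S" "set C \<subseteq> S"
    and meets: "set A \<inter> set B = {c}" "set A \<inter> set C = {c}" "set B \<inter> set C = {c}"
    by (rule connected_on_tripod[OF assms(1,2) pJ])
  define L where "L j = (if j = j1 then A else if j = j2 then B else C)" for j
  show thesis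
  proof (rule that[of c L])
    fix j assume "j \<in> J"
    then consider "j = j1" | "j = j2" | "j = j3" using J(1) by blast
    then show "gpath E (L j) \<and> hd (L j) = c \<and> last (L j) = p j \<and> set (L j) \<subseteq> S"
      by cases (use paths ends sets J in \<open>simp_all add: L_def\<close>)
  next
    fix j j' assume "j \<in> J" "j' \<in> J" "j \<noteq> j'"
    then have "{L j, L j'} = {A, B} \<or> {L j, L j'} = {A, C} \<or> {L j, L j'} = {B, C}"
      using J unfolding L_def by auto
    then show "set (L j) \<inter> set (L j') = {c}" using meets by (auto simp: doubleton_eq_iff)
  qed fact
qed

lemma bipartite_obtain_colouring:
  assumes "bipartite W E"
  obtains col :: "'b \<Rightarrow> bool" where "\<And>u v. E u v \<Longrightarrow> col u \<noteq> col v"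
proof -
  obtain A B where "A \<inter> B = {}" "\<forall>u v. E u v \<longrightarrow> (u \<in> A \<and> v \<in> B) \<or> (u \<in> B \<and> v \<in> A)"
    using assms unfolding bipartite_def by blast
  then show thesis by (intro that[of "\<lambda>u. u \<in> A"]) blast
qed

lemma gpath_even_iff_same_colour:
  fixes col :: "'b \<Rightarrow> bool"
  assumes "gpath E ps" "\<And>u v. E u v \<Longrightarrow> col u \<noteq> col v"
  shows "even (length ps - 1) \<longleftrightarrow> col (hd ps) = col (last ps)"
proof -
  have "successively E ps" "ps \<noteq> []" using assms(1) by (auto simp: gpath_iff_successively)
  then show ?thesis
  proof (induction ps)
    case (Cons a ps)
    show ?case
    proof (cases ps)
      case (Cons b qs)
      then have "col a \<noteq> col b" "even (length qs) \<longleftrightarrow> col b = col (last ps)"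
        using Cons.prems Cons.IH assms(2)[of a b] by auto
      then have "odd (length qs) \<longleftrightarrow> col a = col (last ps)" by blast
      then show ?thesis using Cons by simp
    qed simp
  qed simp
qed

lemma theta_even_of_same_colour_ends:
  fixes col :: "'b \<Rightarrow> bool"
  assumes col: "\<And>u v. E u v \<Longrightarrow> col u \<noteq> col v" and "x \<noteq> y" "col x = col y"
    and paths: "\<And>P. P \<in> {P1, P2, P3} \<Longrightarrow> gpath E P \<and> hd P = x \<and> last P = y \<and> set P \<subseteq> W"
    and "set P1 \<inter> set P2 = {x, y}" "set P1 \<inter> set P3 = {x, y}" "set P2 \<inter> set P3 = {x, y}"
  shows "has_even_theta W E"
proof -
  have even: "even (length P - 1)" if "P \<in> {P1, P2, P3}" for P
    using gpath_even_iff_same_colour[of E P col, OF _ col] paths[OF that] assms(3) by auto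
  show ?thesis unfolding has_even_theta_def
    using assms(2,5-7) paths[of P1] paths[of P2] paths[of P3] even[of P1] even[of P2] even[of P3]
    by (intro exI[of _ x] exI[of _ y] exI[of _ P1] exI[of _ P2] exI[of _ P3]) simp
qed

section \<open>Subdivisions of \<open>K\<^sub>4\<close>\<close>

text \<open>The paths are indexed by ordered pairs of branch vertices; \<open>Q i j\<close> and \<open>Q j i\<close> need
  not be related.\<close>

definition K4_subdivision ::
  "'b set \<Rightarrow> ('b \<Rightarrow> 'b \<Rightarrow> bool) \<Rightarrow> (nat \<Rightarrow> 'b) \<Rightarrow> (nat \<Rightarrow> nat \<Rightarrow> 'b list) \<Rightarrow> bool" where
  "K4_subdivision W E c Q \<longleftrightarrow>
     (\<forall>i<4. \<forall>j<4. i \<noteq> j \<longrightarrow>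
        gpath E (Q i j) \<and> hd (Q i j) = c i \<and> last (Q i j) = c j \<and> set (Q i j) \<subseteq> W) \<and>
     (\<forall>i<4. \<forall>j<4. \<forall>k<4. \<forall>l<4. i \<noteq> j \<longrightarrow> k \<noteq> l \<longrightarrow> {i, j} \<noteq> {k, l} \<longrightarrow>
        set (Q i j) \<inter> set (Q k l) \<subseteq> c ` ({i, j} \<inter> {k, l}))"

lemma K4_subdivision_path:
  assumes "K4_subdivision W E c Q" "i < 4" "j < 4" "i \<noteq> j"
  shows "gpath E (Q i j) \<and> hd (Q i j) = c i \<and> last (Q i j) = c j \<and> set (Q i j) \<subseteq> W"
  using assms(1)[unfolded K4_subdivision_def, THEN conjunct1, rule_format, OF assms(2-4)] .

lemma K4_subdivision_meet:
  assumes "K4_subdivision W E c Q" "i < 4" "j < 4" "k < 4" "l < 4"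
    "i \<noteq> j" "k \<noteq> l" "{i, j} \<noteq> {k, l}"
  shows "set (Q i j) \<inter> set (Q k l) \<subseteq> c ` ({i, j} \<inter> {k, l})"
  using assms(1)[unfolded K4_subdivision_def, THEN conjunct2, rule_format, OF assms(2-8)] .

lemma K4_subdivision_branch_in_path:
  assumes "K4_subdivision W E c Q" "i < 4" "j < 4" "i \<noteq> j"
  shows "c i \<in> set (Q i j)" "c j \<in> set (Q i j)"
  using K4_subdivision_path[OF assms] hd_in_set last_in_set by (fastforce simp: gpath_def)+

lemma K4_subdivision_route:
  assumes K4: "K4_subdivision W E c Q" and "i < 4" "m < 4" "j < 4" "distinct [i, m, j]"
  shows "gpath E (Q i m @ tl (Q m j)) \<and> hd (Q i m @ tl (Q m j)) = c i
    \<and> last (Q i m @ tl (Q m j)) = c j \<and> set (Q i m @ tl (Q m j)) = set (Q i m) \<union> set (Q m j)"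
proof -
  note Q = K4_subdivision_path[OF K4] and meet = K4_subdivision_meet[OF K4]
  have ne: "Q i m \<noteq> []" "Q m j \<noteq> []" using Q assms by (auto simp: gpath_def)
  have join: "last (Q i m) = hd (Q m j)" using Q assms by simp
  have "set (Q i m) \<inter> set (Q m j) \<subseteq> {hd (Q m j)}"
    using meet[of i m m j] Q[of m j] assms by (auto simp: doubleton_eq_iff)
  then have "gpath E (Q i m @ tl (Q m j))"
    using Q[of i m] Q[of m j] assms join by (intro gpath_append_tl) auto
  then show ?thesis
    using Q[of i m] Q[of m j] assms ne set_append_tl[OF ne join] last_append_tl[OF ne join] by simp
qed

lemma K4_subdivision_even_theta:
  fixes col :: "'b \<Rightarrow> bool"
  assumes K4: "K4_subdivision W E c Q" and col: "\<And>u v. E u v \<Longrightarrow> col u \<noteq> col v"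
    and ijkl: "i < 4" "j < 4" "k < 4" "l < 4" "distinct [i, j, k, l]"
    and same: "col (c i) = col (c j)"
  shows "has_even_theta W E"
proof -
  note Q = K4_subdivision_path[OF K4] and meet = K4_subdivision_meet[OF K4]
    and ends = K4_subdivision_branch_in_path[OF K4]
    and route = K4_subdivision_route[OF K4]
  define P1 where "P1 = Q i j"
  define P2 where "P2 = Q i k @ tl (Q k j)"
  define P3 where "P3 = Q i l @ tl (Q l j)"
  note P2 = route[of i k j] and P3 = route[of i l j]
  have m12: "set P1 \<inter> set P2 = {c i, c j}"
    using meet[of i j i k] meet[of i j k j] ends[of i j] ends[of i k] ends[of k j] P2 ijkl
    unfolding P1_def P2_def by (auto simp: doubleton_eq_iff)
  have m13: "set P1 \<inter> set P3 = {c i, c j}"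
    using meet[of i j i l] meet[of i j l j] ends[of i j] ends[of i l] ends[of l j] P3 ijkl
    unfolding P1_def P3_def by (auto simp: doubleton_eq_iff)
  have m23: "set P2 \<inter> set P3 = {c i, c j}"
    using meet[of i k i l] meet[of i k l j] meet[of k j i l] meet[of k j l j] P2 P3
      ends[of i k] ends[of i l] ends[of k j] ends[of l j] ijkl
    unfolding P2_def P3_def by (auto simp: doubleton_eq_iff)
  have cij: "c i \<noteq> c j"
    using meet[of i k j l] ends[of i k] ends[of j l] ijkl by (auto simp: doubleton_eq_iff)
  have paths: "gpath E P \<and> hd P = c i \<and> last P = c j \<and> set P \<subseteq> W" if "P \<in> {P1, P2, P3}" for P
    using that Q[of i j] Q[of i k] Q[of k j] Q[of i l] Q[of l j] P2 P3 ijkl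
    unfolding P1_def P2_def P3_def by auto
  show ?thesis by (rule theta_even_of_same_colour_ends[where col = col, OF col cij same paths m12 m13 m23])
qed

lemma K4_minor_obtain_attachments:
  fixes E :: "'b \<Rightarrow> 'b \<Rightarrow> bool"
  assumes "symp E" "has_K4_minor W E"
  obtains B a where "\<And>i :: nat. i < 4 \<Longrightarrow> B i \<subseteq> W \<and> connected_on E (B i)"
    and "\<And>i j :: nat. i < 4 \<Longrightarrow> j < 4 \<Longrightarrow> i \<noteq> j \<Longrightarrow> B i \<inter> B j = {}"
    and "\<And>i j :: nat. i < 4 \<Longrightarrow> j < 4 \<Longrightarrow> i \<noteq> j \<Longrightarrow> a i j \<in> B i \<and> E (a i j) (a j i)"
proof -
  obtain B :: "nat \<Rightarrow> 'b set" where "(\<forall>i<4. B i \<noteq> {} \<and> B i \<subseteq> W \<and> connected_on E (B i)) \<and>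
    (\<forall>i<4. \<forall>j<4. i \<noteq> j \<longrightarrow> B i \<inter> B j = {} \<and> (\<exists>u\<in>B i. \<exists>v\<in>B j. E u v))"
    using assms(2) unfolding has_K4_minor_def ..
  note B = conjunct1[OF this, rule_format] conjunct2[OF this, rule_format]
  obtain u v where uv: "\<And>i j. i < 4 \<Longrightarrow> j < 4 \<Longrightarrow> i \<noteq> j \<Longrightarrow>
      u i j \<in> B i \<and> v i j \<in> B j \<and> E (u i j) (v i j)"
    using B(2) by metis
  define a where "a i j = (if i < j then u i j else v j i)" for i j
  have "a i j \<in> B i \<and> E (a i j) (a j i)" if ij: "i < 4" "j < 4" "i \<noteq> j" for i j
  proof (cases "i < j")
    case True
    then show ?thesis using uv[OF ij] unfolding a_def by simp
  next
    case False
    then have "j < i" using ij(3) by simp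
    then show ?thesis using uv[of j i] ij unfolding a_def by (auto intro: sympD[OF assms(1)])
  qed
  with B show thesis by (intro that[of B a]) auto
qed

lemma branch_sets_tripods:
  assumes "symp E" and conn: "\<And>i :: nat. i < 4 \<Longrightarrow> connected_on E (B i)"
    and a: "\<And>i j. i < 4 \<Longrightarrow> j < 4 \<Longrightarrow> i \<noteq> j \<Longrightarrow> a i j \<in> B i"
  shows "\<exists>c Leg. (\<forall>i<4. \<forall>j<4. i \<noteq> j \<longrightarrow>
      gpath E (Leg i j) \<and> hd (Leg i j) = c i \<and> last (Leg i j) = a i j \<and> set (Leg i j) \<subseteq> B i)
    \<and> (\<forall>i<4. \<forall>j<4. \<forall>j'<4. i \<noteq> j \<longrightarrow> i \<noteq> j' \<longrightarrow> j \<noteq> j' \<longrightarrow>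
      set (Leg i j) \<inter> set (Leg i j') = {c i})"
proof -
  have "\<forall>i<4. \<exists>ci L.
      (\<forall>j<4. j \<noteq> i \<longrightarrow> gpath E (L j) \<and> hd (L j) = ci \<and> last (L j) = a i j \<and> set (L j) \<subseteq> B i)
      \<and> (\<forall>j<4. \<forall>j'<4. j \<noteq> i \<longrightarrow> j' \<noteq> i \<longrightarrow> j \<noteq> j' \<longrightarrow> set (L j) \<inter> set (L j') = {ci})"
  proof (intro allI impI)
    fix i :: nat assume i: "i < 4"
    have card: "card ({..<4} - {i}) = 3" using i by simp
    have attach: "a i ` ({..<4} - {i}) \<subseteq> B i" using a i by blast
    obtain ci L where "ci \<in> B i"
      "\<And>j. j \<in> {..<4} - {i} \<Longrightarrow> gpath E (L j) \<and> hd (L j) = ci \<and> last (L j) = a i j \<and> set (L j) \<subseteq> B i"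
      "\<And>j j'. j \<in> {..<4} - {i} \<Longrightarrow> j' \<in> {..<4} - {i} \<Longrightarrow> j \<noteq> j' \<Longrightarrow> set (L j) \<inter> set (L j') = {ci}"
      using connected_on_tripod_indexed[OF assms(1) conn[OF i] card attach] by blast
    then show "\<exists>ci L.
      (\<forall>j<4. j \<noteq> i \<longrightarrow> gpath E (L j) \<and> hd (L j) = ci \<and> last (L j) = a i j \<and> set (L j) \<subseteq> B i)
      \<and> (\<forall>j<4. \<forall>j'<4. j \<noteq> i \<longrightarrow> j' \<noteq> i \<longrightarrow> j \<noteq> j' \<longrightarrow> set (L j) \<inter> set (L j') = {ci})"
      by (intro exI[of _ ci] exI[of _ L]) simp
  qed
  then obtain c Leg where tripods: "\<forall>i<4.
      (\<forall>j<4. j \<noteq> i \<longrightarrow> gpath E (Leg i j) \<and> hd (Leg i j) = c i \<and> last (Leg i j) = a i j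
        \<and> set (Leg i j) \<subseteq> B i)
      \<and> (\<forall>j<4. \<forall>j'<4. j \<noteq> i \<longrightarrow> j' \<noteq> i \<longrightarrow> j \<noteq> j' \<longrightarrow> set (Leg i j) \<inter> set (Leg i j') = {c i})"
    by metis
  show ?thesis by (intro exI[of _ c] exI[of _ Leg]) (use tripods in auto)
qed

lemma K4_minor_obtain_subdivision:
  assumes "symp E" "has_K4_minor W E"
  obtains c Q where "K4_subdivision W E c Q"
proof -
  obtain B a where B: "\<And>i :: nat. i < 4 \<Longrightarrow> B i \<subseteq> W \<and> connected_on E (B i)"
    and B_disj: "\<And>i j. i < 4 \<Longrightarrow> j < 4 \<Longrightarrow> i \<noteq> j \<Longrightarrow> B i \<inter> B j = {}"
    and a: "\<And>i j. i < 4 \<Longrightarrow> j < 4 \<Longrightarrow> i \<noteq> j \<Longrightarrow> a i j \<in> B i \<and> E (a i j) (a j i)"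
    using K4_minor_obtain_attachments[OF assms] by blast
  have "\<exists>c Leg. (\<forall>i<4. \<forall>j<4. i \<noteq> j \<longrightarrow>
      gpath E (Leg i j) \<and> hd (Leg i j) = c i \<and> last (Leg i j) = a i j \<and> set (Leg i j) \<subseteq> B i)
    \<and> (\<forall>i<4. \<forall>j<4. \<forall>j'<4. i \<noteq> j \<longrightarrow> i \<noteq> j' \<longrightarrow> j \<noteq> j' \<longrightarrow>
      set (Leg i j) \<inter> set (Leg i j') = {c i})"
  proof (rule branch_sets_tripods[OF assms(1)])
    show "connected_on E (B i)" if "i < 4" for i using B[OF that] ..
    show "a i j \<in> B i" if "i < 4" "j < 4" "i \<noteq> j" for i j using a[OF that] ..
  qed
  then obtain c Leg where "(\<forall>i<4. \<forall>j<4. i \<noteq> j \<longrightarrow>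
      gpath E (Leg i j) \<and> hd (Leg i j) = c i \<and> last (Leg i j) = a i j \<and> set (Leg i j) \<subseteq> B i)
    \<and> (\<forall>i<4. \<forall>j<4. \<forall>j'<4. i \<noteq> j \<longrightarrow> i \<noteq> j' \<longrightarrow> j \<noteq> j' \<longrightarrow>
      set (Leg i j) \<inter> set (Leg i j') = {c i})" by (elim exE) (rule that)
  note Leg = conjunct1[OF this, rule_format] and Leg_meet = conjunct2[OF this, rule_format]
  define Q where "Q i j = Leg i j @ rev (Leg j i)" for i j
  have Q: "gpath E (Q i j) \<and> hd (Q i j) = c i \<and> last (Q i j) = c j \<and> set (Q i j) \<subseteq> W"
    if "i < 4" "j < 4" "i \<noteq> j" for i j
  proof -
    have "Leg i j \<noteq> []" "Leg j i \<noteq> []" using Leg that by (auto simp: gpath_def)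
    moreover have "gpath E (Leg i j @ rev (Leg j i))"
      using Leg[OF that] Leg[of j i] gpath_rev[OF assms(1)] a[OF that] B_disj[OF that] that
        \<open>Leg j i \<noteq> []\<close> by (intro gpath_append) (auto simp: hd_rev)
    ultimately show ?thesis
      using Leg[OF that] Leg[of j i] B[of i] B[of j] that unfolding Q_def by (auto simp: last_rev)
  qed
  have Leg_overlap: "a' = a'' \<and> z = c a'"
    if "z \<in> set (Leg a' b')" "z \<in> set (Leg a'' b'')" "(a', b') \<noteq> (a'', b'')"
      "a' < 4" "b' < 4" "a'' < 4" "b'' < 4" "a' \<noteq> b'" "a'' \<noteq> b''" for a' b' a'' b'' z
  proof -
    have "z \<in> B a' \<inter> B a''" using that Leg[of a' b'] Leg[of a'' b''] by auto
    then have "a' = a''" using B_disj that by blast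
    then show ?thesis using Leg_meet[of a' b' b''] that by auto
  qed
  have "set (Q i j) \<inter> set (Q k l) \<subseteq> c ` ({i, j} \<inter> {k, l})"
    if "i < 4" "j < 4" "k < 4" "l < 4" "i \<noteq> j" "k \<noteq> l" "{i, j} \<noteq> {k, l}" for i j k l
  proof
    fix z assume "z \<in> set (Q i j) \<inter> set (Q k l)"
    then obtain a' b' a'' b'' where "{a', b'} = {i, j}" "{a'', b''} = {k, l}"
      "z \<in> set (Leg a' b')" "z \<in> set (Leg a'' b'')"
      unfolding Q_def by (auto simp: insert_commute)
    then show "z \<in> c ` ({i, j} \<inter> {k, l})"
      using Leg_overlap[of z a' b' a'' b''] that by (auto simp: doubleton_eq_iff)
  qed
  with Q show thesis by (intro that[of c Q]) (simp add: K4_subdivision_def)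
qed

lemma graph_symp: "graph W E \<Longrightarrow> symp E"
  unfolding graph_def by (auto intro: sympI)

lemma bipartite_K4_minor_even_theta:
  assumes "graph W E" "bipartite W E" "has_K4_minor W E"
  shows "has_even_theta W E"
proof -
  obtain c Q where K4: "K4_subdivision W E c Q"
    using K4_minor_obtain_subdivision[OF graph_symp[OF assms(1)] assms(3)] by blast
  obtain col :: "_ \<Rightarrow> bool" where col: "\<And>u v. E u v \<Longrightarrow> col u \<noteq> col v"
    using bipartite_obtain_colouring[OF assms(2)] by blast
  have "col (c 0) = col (c 1) \<or> col (c 0) = col (c 2) \<or> col (c 1) = col (c 2)" by blast
  then show ?thesis
    using K4_subdivision_even_theta[OF K4 col, where i = 0 and j = 1 and k = 2 and l = 3]
      K4_subdivision_even_theta[OF K4 col, where i = 0 and j = 2 and k = 1 and l = 3]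
      K4_subdivision_even_theta[OF K4 col, where i = 1 and j = 2 and k = 0 and l = 3] by auto
qed

section \<open>Line graphs\<close>

lemma distinct_nth_in_link_iff:
  assumes "distinct ps" "Suc k < length ps" "i < length ps"
  shows "ps ! i \<in> {ps ! k, ps ! Suc k} \<longleftrightarrow> i = k \<or> i = Suc k"
  using assms by (auto simp: nth_eq_iff_index_eq)

lemma distinct_links_meet_iff:
  assumes "distinct ps" "Suc k < length ps" "Suc m < length ps"
  shows "{ps ! k, ps ! Suc k} \<inter> {ps ! m, ps ! Suc m} \<noteq> {} \<longleftrightarrow> k = m \<or> k = Suc m \<or> m = Suc k"
  using assms by (auto simp: nth_eq_iff_index_eq)

lemma distinct_links_eq_iff:
  assumes "distinct ps" "Suc k < length ps" "Suc m < length ps"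
  shows "{ps ! k, ps ! Suc k} = {ps ! m, ps ! Suc m} \<longleftrightarrow> k = m"
  using assms by (auto simp: nth_eq_iff_index_eq doubleton_eq_iff)

locale line_graph_iso =
  fixes V :: "'a set" and adj :: "'a \<Rightarrow> 'a \<Rightarrow> bool"
    and E :: "'b \<Rightarrow> 'b \<Rightarrow> bool" and f :: "'a \<Rightarrow> 'b set"
  assumes f_bij: "bij_betw f V (edges E)"
    and adj_iff: "\<And>x y. x \<in> V \<Longrightarrow> y \<in> V \<Longrightarrow> adj x y \<longleftrightarrow> x \<noteq> y \<and> f x \<inter> f y \<noteq> {}"
begin

definition edge_path :: "'b list \<Rightarrow> 'a list" where
  "edge_path ps = map (\<lambda>k. inv_into V f {ps ! k, ps ! Suc k}) [0..<length ps - 1]"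

lemma length_edge_path [simp]: "length (edge_path ps) = length ps - 1"
  by (simp add: edge_path_def)

lemma edge_path_nth:
  assumes "gpath E ps" "Suc k < length ps"
  shows "edge_path ps ! k \<in> V" "f (edge_path ps ! k) = {ps ! k, ps ! Suc k}"
proof -
  have "{ps ! k, ps ! Suc k} \<in> f ` V"
    using assms f_bij unfolding gpath_def edges_def bij_betw_def by blast
  moreover have "edge_path ps ! k = inv_into V f {ps ! k, ps ! Suc k}"
    using assms(2) by (simp add: edge_path_def less_diff_conv)
  ultimately show "edge_path ps ! k \<in> V" "f (edge_path ps ! k) = {ps ! k, ps ! Suc k}"
    by (simp_all add: inv_into_into f_inv_into_f)
qed

lemma in_set_edge_path:
  assumes "gpath E ps" "u \<in> set (edge_path ps)"
  obtains k where "Suc k < length ps" "u = edge_path ps ! k" "u \<in> V" "f u = {ps ! k, ps ! Suc k}"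
proof -
  obtain k where "k < length (edge_path ps)" "u = edge_path ps ! k"
    using assms(2) by (auto simp: in_set_conv_nth)
  moreover from this have "Suc k < length ps" by simp
  ultimately show thesis using edge_path_nth[OF assms(1)] by (intro that[of k]) simp_all
qed

lemma distinct_edge_path:
  assumes "gpath E ps"
  shows "distinct (edge_path ps)"
proof -
  have "distinct ps" using assms by (simp add: gpath_def)
  show ?thesis
    unfolding distinct_conv_nth
  proof (intro allI impI)
    fix i j assume "i < length (edge_path ps)" "j < length (edge_path ps)" "i \<noteq> j"
    then have "Suc i < length ps" "Suc j < length ps" by auto
    with \<open>i \<noteq> j\<close> have "f (edge_path ps ! i) \<noteq> f (edge_path ps ! j)"
      using edge_path_nth(2)[OF assms] distinct_links_eq_iff[OF \<open>distinct ps\<close>] by simp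
    then show "edge_path ps ! i \<noteq> edge_path ps ! j" by auto
  qed
qed

lemma adj_edge_path_nth_iff:
  assumes "gpath E ps" "Suc k < length ps" "Suc m < length ps"
  shows "adj (edge_path ps ! k) (edge_path ps ! m) \<longleftrightarrow> k = Suc m \<or> m = Suc k"
proof -
  note k = edge_path_nth[OF assms(1,2)] and m = edge_path_nth[OF assms(1,3)]
  have "edge_path ps ! k = edge_path ps ! m \<longleftrightarrow> k = m"
    using distinct_edge_path[OF assms(1)] assms(2,3) by (simp add: nth_eq_iff_index_eq)
  then have "adj (edge_path ps ! k) (edge_path ps ! m) \<longleftrightarrow>
      k \<noteq> m \<and> {ps ! k, ps ! Suc k} \<inter> {ps ! m, ps ! Suc m} \<noteq> {}"
    using adj_iff[OF k(1) m(1)] k(2) m(2) by simp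
  also have "\<dots> \<longleftrightarrow> k = Suc m \<or> m = Suc k"
    using distinct_links_meet_iff[OF _ assms(2,3)] assms(1) by (auto simp: gpath_def)
  finally show ?thesis .
qed

lemma induced_path_edge_path:
  assumes "gpath E ps" "2 \<le> length ps"
  shows "induced_path adj (edge_path ps)"
  unfolding induced_path_def gpath_def
  using assms(2) distinct_edge_path[OF assms(1)] adj_edge_path_nth_iff[OF assms(1)]
  by (auto simp flip: length_greater_0_conv)

lemma consec_edge_path_iff:
  assumes "gpath E ps" "u \<in> set (edge_path ps)" "v \<in> set (edge_path ps)"
  shows "consec (edge_path ps) u v \<longleftrightarrow> adj u v"
proof -
  let ?L = "edge_path ps"
  obtain k m where km: "Suc k < length ps" "Suc m < length ps" "u = ?L ! k" "v = ?L ! m"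
    using in_set_edge_path[OF assms(1)] assms(2,3) by metis
  have "consec ?L u v \<longleftrightarrow> k = Suc m \<or> m = Suc k"
  proof
    assume "consec ?L u v"
    then obtain n where "Suc n < length ?L" "{?L ! k, ?L ! m} = {?L ! n, ?L ! Suc n}"
      unfolding consec_def km by blast
    then show "k = Suc m \<or> m = Suc k"
      using distinct_edge_path[OF assms(1)] km(1,2)
      by (auto simp: doubleton_eq_iff nth_eq_iff_index_eq)
  next
    assume "k = Suc m \<or> m = Suc k"
    then consider "k = Suc m" | "m = Suc k" by blast
    then show "consec ?L u v"
    proof cases
      case 1
      then show ?thesis unfolding consec_def km using km(1)
        by (intro exI[of _ m]) (auto simp: insert_commute)
    next
      case 2
      then show ?thesis unfolding consec_def km using km(2) by (intro exI[of _ k]) auto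
    qed
  qed
  then show ?thesis using adj_edge_path_nth_iff[OF assms(1) km(1,2)] km(3,4) by simp
qed

lemma edge_path_ends:
  assumes "gpath E ps" "u \<in> set (edge_path ps)"
  shows "hd ps \<in> f u \<longleftrightarrow> u = hd (edge_path ps)" "last ps \<in> f u \<longleftrightarrow> u = last (edge_path ps)"
proof -
  let ?L = "edge_path ps" and ?n = "length ps"
  obtain k where k: "Suc k < ?n" "u = ?L ! k" "f u = {ps ! k, ps ! Suc k}"
    using in_set_edge_path[OF assms] by metis
  have d: "distinct ps" "distinct ?L" using assms(1) distinct_edge_path by (auto simp: gpath_def)
  have "hd ps = ps ! 0" "last ps = ps ! (?n - 1)" "hd ?L = ?L ! 0" "last ?L = ?L ! (?n - 2)"
    using k(1) by (auto simp: hd_conv_nth last_conv_nth numeral_2_eq_2 simp flip: length_greater_0_conv)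
  moreover have "u = ?L ! 0 \<longleftrightarrow> k = 0" "u = ?L ! (?n - 2) \<longleftrightarrow> k = ?n - 2"
    using k(1,2) d(2) by (auto simp: nth_eq_iff_index_eq)
  moreover have "0 < ?n" "?n - 1 < ?n" using k(1) by auto
  then have "ps ! 0 \<in> f u \<longleftrightarrow> k = 0" "ps ! (?n - 1) \<in> f u \<longleftrightarrow> k = ?n - 2"
    using distinct_nth_in_link_iff[OF d(1) k(1)] k(1,3) by auto
  ultimately show "hd ps \<in> f u \<longleftrightarrow> u = hd ?L" "last ps \<in> f u \<longleftrightarrow> u = last ?L" by simp_all
qed

lemma edge_path_in_V: "gpath E ps \<Longrightarrow> set (edge_path ps) \<subseteq> V"
  using in_set_edge_path by blast

lemma edge_path_subset:
  assumes "gpath E ps" "u \<in> set (edge_path ps)"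
  shows "f u \<subseteq> set ps"
proof -
  obtain k where "Suc k < length ps" "f u = {ps ! k, ps ! Suc k}"
    using in_set_edge_path[OF assms] by metis
  then show ?thesis by auto
qed

lemma hd_edge_path_neq_last:
  assumes "gpath E ps" "3 \<le> length ps"
  shows "hd (edge_path ps) \<noteq> last (edge_path ps)"
proof -
  have "distinct (edge_path ps)" "2 \<le> length (edge_path ps)"
    using distinct_edge_path[OF assms(1)] assms(2) by auto
  then show ?thesis by (cases "edge_path ps") auto
qed

text \<open>Two paths meeting only in their common ends \<open>x\<close>, \<open>y\<close> have no edge in common, since
  such an edge would be \<open>xy\<close>, i.e.\ a path of length one.\<close>

lemma edge_paths_disjoint:
  assumes "gpath E Pa" "gpath E Pb" "set Pa \<inter> set Pb = {hd Pa, last Pa}" "3 \<le> length Pa"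
  shows "set (edge_path Pa) \<inter> set (edge_path Pb) = {}"
proof (rule ccontr)
  assume "set (edge_path Pa) \<inter> set (edge_path Pb) \<noteq> {}"
  then obtain u where u: "u \<in> set (edge_path Pa)" "u \<in> set (edge_path Pb)" by blast
  then obtain k where k: "Suc k < length Pa" "f u = {Pa ! k, Pa ! Suc k}"
    using in_set_edge_path[OF assms(1)] by metis
  have "Pa ! k \<noteq> Pa ! Suc k" using assms(1) k(1) by (simp add: gpath_def nth_eq_iff_index_eq)
  moreover have "f u \<subseteq> set Pa \<inter> set Pb"
    using edge_path_subset[OF assms(1) u(1)] edge_path_subset[OF assms(2) u(2)] by blast
  ultimately have "hd Pa \<in> f u" "last Pa \<in> f u" using k(2) assms(3) by auto
  then show False
    using edge_path_ends[OF assms(1) u(1)] hd_edge_path_neq_last[OF assms(1,4)] by simp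
qed

lemma adj_edge_paths_iff:
  assumes "gpath E Pa" "gpath E Pb" "set Pa \<inter> set Pb = {x, y}"
    "u \<in> set (edge_path Pa)" "v \<in> set (edge_path Pb)"
  shows "adj u v \<longleftrightarrow> u \<noteq> v \<and> (x \<in> f u \<and> x \<in> f v \<or> y \<in> f u \<and> y \<in> f v)"
proof -
  have "f u \<inter> f v \<subseteq> {x, y}"
    using edge_path_subset[OF assms(1,4)] edge_path_subset[OF assms(2,5)] assms(3) by blast
  then show ?thesis
    using adj_iff edge_path_in_V[OF assms(1)] edge_path_in_V[OF assms(2)] assms(4,5) by blast
qed

end

locale line_graph_theta = line_graph_iso +
  fixes x y :: 'b and P :: "nat \<Rightarrow> 'b list"
  assumes theta_path:
      "\<And>i. i < 3 \<Longrightarrow> gpath E (P i) \<and> hd (P i) = x \<and> last (P i) = y \<and> even (length (P i) - 1)"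
    and theta_meet: "\<And>i j. i < 3 \<Longrightarrow> j < 3 \<Longrightarrow> i \<noteq> j \<Longrightarrow> set (P i) \<inter> set (P j) = {x, y}"
    and theta_ends_distinct: "x \<noteq> y"
begin

abbreviation L :: "nat \<Rightarrow> 'a list" where "L i \<equiv> edge_path (P i)"

lemma theta_path_long: "i < 3 \<Longrightarrow> 3 \<le> length (P i)"
  using gpath_even_length_ge_3 theta_path theta_ends_distinct by metis

lemma L_nonempty:
  assumes "i < 3"
  shows "L i \<noteq> []"
  using theta_path_long[OF assms] by (simp flip: length_greater_0_conv)

lemma L_ends:
  assumes "i < 3" "u \<in> set (L i)"
  shows "x \<in> f u \<longleftrightarrow> u = hd (L i)" "y \<in> f u \<longleftrightarrow> u = last (L i)"
  using edge_path_ends[of "P i" u] theta_path[OF assms(1)] assms(2) by auto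

lemma L_unique:
  assumes "i < 3" "j < 3" "u \<in> set (L i)" "u \<in> set (L j)"
  shows "i = j"
proof (rule ccontr)
  assume "i \<noteq> j"
  then have "set (L i) \<inter> set (L j) = {}"
    using edge_paths_disjoint theta_path[OF assms(1)] theta_path[OF assms(2)]
      theta_meet[OF assms(1,2)] theta_path_long[OF assms(1)] by simp
  then show False using assms(3,4) by blast
qed

lemma hd_L_iff:
  assumes "i < 3" "u \<in> set (L i)"
  shows "u \<in> {hd (L 0), hd (L 1), hd (L 2)} \<longleftrightarrow> u = hd (L i)"
proof
  assume "u \<in> {hd (L 0), hd (L 1), hd (L 2)}"
  then have "\<exists>j<3. u = hd (L j)" by (auto simp: numeral_3_eq_3 numeral_2_eq_2 less_Suc_eq)
  then obtain j where j: "j < 3" "u = hd (L j)" by blast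
  then have "u \<in> set (L j)" using L_nonempty by simp
  with j show "u = hd (L i)" using L_unique[OF assms(1) j(1) assms(2)] by simp
qed (use assms(1) in \<open>auto simp: numeral_3_eq_3 numeral_2_eq_2 less_Suc_eq\<close>)

lemma last_L_iff:
  assumes "i < 3" "u \<in> set (L i)"
  shows "u \<in> {last (L 0), last (L 1), last (L 2)} \<longleftrightarrow> u = last (L i)"
proof
  assume "u \<in> {last (L 0), last (L 1), last (L 2)}"
  then have "\<exists>j<3. u = last (L j)" by (auto simp: numeral_3_eq_3 numeral_2_eq_2 less_Suc_eq)
  then obtain j where j: "j < 3" "u = last (L j)" by blast
  then have "u \<in> set (L j)" using L_nonempty by simp
  with j show "u = last (L i)" using L_unique[OF assms(1) j(1) assms(2)] by simp
qed (use assms(1) in \<open>auto simp: numeral_3_eq_3 numeral_2_eq_2 less_Suc_eq\<close>)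

lemma consec_L_iff:
  assumes "k < 3" "i < 3" "j < 3" "u \<in> set (L i)" "v \<in> set (L j)"
  shows "consec (L k) u v \<longleftrightarrow> k = i \<and> i = j \<and> consec (L i) u v"
proof
  assume uv: "consec (L k) u v"
  have "k = i" using L_unique[OF assms(1,2) conjunct1[OF consec_in_set[OF uv]] assms(4)] .
  moreover have "k = j" using L_unique[OF assms(1,3) conjunct2[OF consec_in_set[OF uv]] assms(5)] .
  ultimately show "k = i \<and> i = j \<and> consec (L i) u v" using uv by simp
next
  assume "k = i \<and> i = j \<and> consec (L i) u v"
  then show "consec (L k) u v" by blast
qed

lemma adj_L_iff:
  assumes uv: "i < 3" "j < 3" "u \<in> set (L i)" "v \<in> set (L j)"
  shows "adj u v \<longleftrightarrow> i = j \<and> consec (L i) u v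
    \<or> u \<noteq> v \<and> u = hd (L i) \<and> v = hd (L j) \<or> u \<noteq> v \<and> u = last (L i) \<and> v = last (L j)"
proof (cases "i = j")
  case True
  then have "adj u v \<longleftrightarrow> consec (L i) u v"
    using consec_edge_path_iff theta_path[OF uv(1)] uv(3,4) by simp
  then show ?thesis using True by blast
next
  case False
  then have "adj u v \<longleftrightarrow> u \<noteq> v \<and> (x \<in> f u \<and> x \<in> f v \<or> y \<in> f u \<and> y \<in> f v)"
    using adj_edge_paths_iff[OF _ _ theta_meet[OF uv(1,2) False]] theta_path uv by blast
  then show ?thesis using L_ends[OF uv(1,3)] L_ends[OF uv(2,4)] False by blast
qed

lemma odd_prism: "odd_prism_in V adj (set (L 0) \<union> set (L 1) \<union> set (L 2))"
proof -
  let ?X = "set (L 0) \<union> set (L 1) \<union> set (L 2)"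
  have L: "induced_path adj (L i) \<and> hd (L i) \<noteq> last (L i) \<and> odd (length (L i) - 1) \<and> set (L i) \<subseteq> V"
    if "i < 3" for i
    using induced_path_edge_path hd_edge_path_neq_last edge_path_in_V theta_path[OF that]
      theta_path_long[OF that] by auto
  have disjoint: "set (L i) \<inter> set (L j) = {}" if "i < 3" "j < 3" "i \<noteq> j" for i j
    using L_unique that by blast
  have adj: "adj u v \<longleftrightarrow> consec (L 0) u v \<or> consec (L 1) u v \<or> consec (L 2) u v
    \<or> (u \<noteq> v \<and> u \<in> {hd (L 0), hd (L 1), hd (L 2)} \<and> v \<in> {hd (L 0), hd (L 1), hd (L 2)})
    \<or> (u \<noteq> v \<and> u \<in> {last (L 0), last (L 1), last (L 2)} \<and> v \<in> {last (L 0), last (L 1), last (L 2)})"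
    if uv: "u \<in> ?X" "v \<in> ?X" for u v
  proof -
    have "\<exists>i<3. w \<in> set (L i)" if "w \<in> ?X" for w
      using that by (auto simp: numeral_3_eq_3 numeral_2_eq_2 less_Suc_eq)
    then obtain i j where ij: "i < 3" "j < 3" "u \<in> set (L i)" "v \<in> set (L j)"
      using uv by meson
    have "consec (L 0) u v \<or> consec (L 1) u v \<or> consec (L 2) u v \<longleftrightarrow> i = j \<and> consec (L i) u v"
      using consec_L_iff[of 0 i j u v] consec_L_iff[of 1 i j u v] consec_L_iff[of 2 i j u v] ij
      by (auto simp: numeral_3_eq_3 numeral_2_eq_2 less_Suc_eq)
    then show ?thesis
      unfolding hd_L_iff[OF ij(1,3)] hd_L_iff[OF ij(2,4)] last_L_iff[OF ij(1,3)] last_L_iff[OF ij(2,4)]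
        adj_L_iff[OF ij]
      by blast
  qed
  have X_V: "?X \<subseteq> V" using L[of 0] L[of 1] L[of 2] by simp
  show ?thesis
    unfolding odd_prism_in_def
    by (rule conjI[OF X_V], rule exI[of _ "L 0"], rule exI[of _ "L 1"], rule exI[of _ "L 2"])
      (use L[of 0] L[of 1] L[of 2] disjoint[of 0 1] disjoint[of 0 2] disjoint[of 1 2] adj in simp)
qed

end

lemma (in line_graph_iso) even_theta_obtain_odd_prism:
  assumes "has_even_theta W E"
  obtains X where "odd_prism_in V adj X"
proof -
  obtain x y P1 P2 P3 where "x \<noteq> y" "gpath E P1" "gpath E P2" "gpath E P3"
    "set P1 \<subseteq> W" "set P2 \<subseteq> W" "set P3 \<subseteq> W"
    "hd P1 = x" "last P1 = y" "hd P2 = x" "last P2 = y" "hd P3 = x" "last P3 = y"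
    "set P1 \<inter> set P2 = {x, y}" "set P1 \<inter> set P3 = {x, y}" "set P2 \<inter> set P3 = {x, y}"
    "even (length P1 - 1)" "even (length P2 - 1)" "even (length P3 - 1)"
    using assms unfolding has_even_theta_def by blast
  note theta = this
  have less_3: "i < 3 \<longleftrightarrow> i = 0 \<or> i = 1 \<or> i = 2" for i :: nat by arith
  interpret line_graph_theta V adj E f x y "(!) [P1, P2, P3]"
  proof unfold_locales
    show "gpath E ([P1, P2, P3] ! i) \<and> hd ([P1, P2, P3] ! i) = x \<and> last ([P1, P2, P3] ! i) = y
      \<and> even (length ([P1, P2, P3] ! i) - 1)" if "i < 3" for i
      using that theta(2-4,8-13,17-19) by (auto simp: less_3)
    show "set ([P1, P2, P3] ! i) \<inter> set ([P1, P2, P3] ! j) = {x, y}"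
      if "i < 3" "j < 3" "i \<noteq> j" for i j
    proof -
      have sym: "set P2 \<inter> set P1 = {x, y}" "set P3 \<inter> set P1 = {x, y}" "set P3 \<inter> set P2 = {x, y}"
        using theta(14-16) by blast+
      from that consider "i = 0" "j = 1" | "i = 0" "j = 2" | "i = 1" "j = 0"
        | "i = 1" "j = 2" | "i = 2" "j = 0" | "i = 2" "j = 1"
        unfolding less_3 by blast
      then show ?thesis by cases (simp_all add: theta(14-16) sym)
    qed
  qed fact
  show thesis by (rule that[OF odd_prism])
qed

lemma is_line_graph_of_obtain_iso:
  assumes "is_line_graph_of V adj W E"
  obtains f where "line_graph_iso V adj E f"
  using assms unfolding is_line_graph_of_def line_graph_iso_def by blast

theorem proposition4p4:
  fixes V :: "'a set" and \<theta> :: "'a \<Rightarrow> 'a \<Rightarrow> int"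
    and W :: "'b set" and E :: "'b \<Rightarrow> 'b \<Rightarrow> bool"
  assumes "line_trigraph V \<theta>"
    and "\<not> (\<exists>X. odd_prism_in V (tadj \<theta>) X)"
    and "graph W E" and "bipartite W E"
    and "is_line_graph_of V (tadj \<theta>) W E"
  shows "\<not> has_even_theta W E \<and> series_parallel W E"
proof -
  obtain f where iso: "line_graph_iso V (tadj \<theta>) E f"
    using is_line_graph_of_obtain_iso[OF assms(5)] by blast
  have "\<not> has_even_theta W E"
    using line_graph_iso.even_theta_obtain_odd_prism[OF iso] assms(2) by blast
  moreover have "series_parallel W E"
    unfolding series_parallel_def
    using bipartite_K4_minor_even_theta[OF assms(3,4)] \<open>\<not> has_even_theta W E\<close> by blast
  ultimately show ?thesis ..
qed

end
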